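(* Let $(G,k)$ be an instance of Clique and let $(\mathcal{G},k',\ell)$ be the instance of Multistage Vertex Cover produced from $(G,k)$ by the construction described in the context. If $G$ contains a clique of size $k$, then $(\mathcal{G},k',\ell)$ is a yes-instance of Multistage Vertex Cover.
   Context: Multistage Vertex Cover: given a temporal graph $\mathcal{G}$, i.e. a sequence of layers (static graphs) $(G_1,\dots,G_\tau)$ on a common vertex set $V'$, and integers $k'\in\mathbb{N}$, $\ell\in\mathbb{N}_0$, decide whether there is $(S_1,\dots,S_\tau)$ with each $S_i\subseteq V'$ a vertex cover of $G_i$ of size at most $k'$ and $|S_i\triangle S_{i+1}|\le\ell$ for all $i<\tau$ ($\triangle$ = symmetric difference). Construction: let $G=(V,E)$ with $E=\{e_1,\dots,e_m\}$, $m=|E|$, and positive integer $k$. Let $K=\binom{k}{2}$, $k'=2K+k+1$, $\kappa=K+k+3$, $\tau=2m\kappa+1$, and $\ell=2$. The vertex set $V'$ contains $V\cup E$ (each edge of $G$ is also a vertex), the sets $U^t=\{u^t_1,\dots,u^t_K\}$ for $t\in\{1,\dots,\kappa+1\}$, the set $C=\{c_1,\dots,c_{\tau}\}$, and additional new leaf vertices introduced below. The layers $G_1,\dots,G_\tau$ have the following edges: (1) for every odd $i\in\{1,\dots,\tau\}$, in $G_i$ the vertex $c_i$ is the center of a star with $k'+1$ new leaf vertices; (2) for every $j\in\{0,\dots,\kappa\}$, in $G_{2mj+1}$ each vertex of $U^{j+1}$ is the center of a star with $k'+1$ new leaf vertices; (3) for every $j\in\{0,\dots,\kappa-1\}$ and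 $i\in\{1,\dots,2m+1\}$, in $G_{2mj+i}$ the vertex $u^{j+1}_x$ is adjacent to $u^{j+2}_x$ for every $x\in\{1,\dots,K\}$; (4) for every even $i\in\{1,\dots,\tau-1\}$, the edge $\{c_i,c_{i+1}\}$ is present in $G_i$ and in $G_{i+1}$; (5) for every $j\in\{0,\dots,\kappa-1\}$ and $i\in\{1,\dots,m\}$ with $e_i=\{v,w\}$, in $G_{2mj+2i}$ the vertex $c_{2mj+2i}$ is adjacent to the vertices $e_i$, $v$ and $w$. No other edges are present. The output is $(\mathcal{G}=(G_1,\dots,G_\tau),k',\ell)$. *)

theory Defs
  imports Main
begin

definition is_vertex_cover :: "'a set set \<Rightarrow> 'a set \<Rightarrow> bool" where
  "is_vertex_cover Es S \<longleftrightarrow> (\<forall>e\<in>Es. e \<inter> S \<noteq> {})"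

definition sym_diff :: "'a set \<Rightarrow> 'a set \<Rightarrow> 'a set" where
  "sym_diff A B = (A - B) \<union> (B - A)"

definition multistage_vc :: "'a set \<Rightarrow> nat \<Rightarrow> (nat \<Rightarrow> 'a set set) \<Rightarrow> nat \<Rightarrow> nat \<Rightarrow> bool" where
  "multistage_vc Vt tau Es k' l \<longleftrightarrow>
     (\<exists>S :: nat \<Rightarrow> 'a set.
        (\<forall>i\<in>{1..tau}. S i \<subseteq> Vt \<and> is_vertex_cover (Es i) (S i) \<and> card (S i) \<le> k') \<and>
        (\<forall>i\<in>{1..<tau}. card (sym_diff (S i) (S (Suc i))) \<le> l))"

text \<open>Vertices of the constructed temporal graph:
  OrigV v  : vertex v of G;
  EdgeV p  : the vertex for edge e_p (p in 1..m);
  U t x    : u^t_x;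
  Cv i     : c_i;
  LeafC i r: the r-th new leaf of the star centered at c_i in layer i (odd i);
  LeafU j x r : the r-th new leaf of the star centered at u^(j+1)_x in layer 2mj+1.\<close>

datatype 'v mvc_vertex =
    OrigV 'v
  | EdgeV nat
  | U nat nat
  | Cv nat
  | LeafC nat nat
  | LeafU nat nat nat

definition mvc_K :: "nat \<Rightarrow> nat" where "mvc_K k = k choose 2"
definition mvc_kprime :: "nat \<Rightarrow> nat" where "mvc_kprime k = 2 * mvc_K k + k + 1"
definition mvc_kappa :: "nat \<Rightarrow> nat" where "mvc_kappa k = mvc_K k + k + 3"
definition mvc_tau :: "'v set list \<Rightarrow> nat \<Rightarrow> nat" where
  "mvc_tau es k = 2 * length es * mvc_kappa k + 1"

text \<open>Edges of G are e_1, ..., e_m with e_p = es ! (p - 1).\<close>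

definition mvc_vertices :: "'v set \<Rightarrow> 'v set list \<Rightarrow> nat \<Rightarrow> 'v mvc_vertex set" where
  "mvc_vertices V es k =
     OrigV ` V \<union> EdgeV ` {1..length es}
     \<union> {U t x | t x. 1 \<le> t \<and> t \<le> mvc_kappa k + 1 \<and> 1 \<le> x \<and> x \<le> mvc_K k}
     \<union> Cv ` {1..mvc_tau es k}
     \<union> {LeafC i r | i r. 1 \<le> i \<and> i \<le> mvc_tau es k \<and> odd i \<and> 1 \<le> r \<and> r \<le> mvc_kprime k + 1}
     \<union> {LeafU j x r | j x r. j \<le> mvc_kappa k \<and> 1 \<le> x \<and> x \<le> mvc_K k
                         \<and> 1 \<le> r \<and> r \<le> mvc_kprime k + 1}"

definition mvc_layer :: "'v set list \<Rightarrow> nat \<Rightarrow> nat \<Rightarrow> 'v mvc_vertex set set" where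
  "mvc_layer es k i =
    (let m = length es; K = mvc_K k; k' = mvc_kprime k; \<kappa> = mvc_kappa k; \<tau> = mvc_tau es k in
     \<comment> \<open>(1)\<close>
     {{Cv i, LeafC i r} | r. odd i \<and> 1 \<le> r \<and> r \<le> k' + 1}
     \<comment> \<open>(2)\<close>
     \<union> {{U (j+1) x, LeafU j x r} | j x r. j \<le> \<kappa> \<and> i = 2*m*j + 1 \<and> 1 \<le> x \<and> x \<le> K
                                        \<and> 1 \<le> r \<and> r \<le> k' + 1}
     \<comment> \<open>(3)\<close>
     \<union> {{U (j+1) x, U (j+2) x} | j x. j < \<kappa> \<and> 2*m*j + 1 \<le> i \<and> i \<le> 2*m*j + (2*m+1)
                                   \<and> 1 \<le> x \<and> x \<le> K}
     \<comment> \<open>(4): edge {c_q, c_(q+1)} for even q in 1..tau-1 is present in G_q and G_(q+1)\<close>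
     \<union> {{Cv q, Cv (q+1)} | q. even q \<and> 1 \<le> q \<and> q \<le> \<tau> - 1 \<and> (i = q \<or> i = q + 1)}
     \<comment> \<open>(5)\<close>
     \<union> {{Cv i, y} | j p y. j < \<kappa> \<and> 1 \<le> p \<and> p \<le> m \<and> i = 2*m*j + 2*p
                         \<and> (y = EdgeV p \<or> (\<exists>v\<in>es ! (p - 1). y = OrigV v))})"

definition has_clique :: "'v set \<Rightarrow> 'v set list \<Rightarrow> nat \<Rightarrow> bool" where
  "has_clique V es k \<longleftrightarrow>
     (\<exists>C. C \<subseteq> V \<and> card C = k \<and> (\<forall>v\<in>C. \<forall>w\<in>C. v \<noteq> w \<longrightarrow> {v, w} \<in> set es))"

end

theory Submission
  imports Defs
begin

(* Let C be the clique and e_{p_1}, ..., e_{p_K} its K edges. At every time i the solution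
   contains C, the edge vertices e_{p_x}, one pointer vertex u^t_x for each x, and one of c_i,
   c_{i+1}. The pointer of x moves from u^{j+1}_x to u^{j+2}_x exactly at the time
   i = 2mj + 2p_x, when the star at c_i is already covered by e_{p_x} and its endpoints; so at
   that time c_{i+1} replaces c_i, and every step changes at most two vertices: either c_i is
   exchanged for c_{i+1}, or a single pointer moves. *)

(* For 0 < s <= n and 0 < i, phase n s i counts the times n * j + s (j >= 0) strictly before i. *)
definition phase :: "nat \<Rightarrow> nat \<Rightarrow> nat \<Rightarrow> nat" where
  "phase n s i = (i + n - s - 1) div n"

lemma phase_eq_iff:
  assumes "0 < s" "s \<le> n" "0 < i"
  shows "phase n s i = j \<longleftrightarrow> i \<le> n * j + s \<and> n * j + s < i + n"
proof
  assume j: "phase n s i = j"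
  have "n * j \<le> i + n - s - 1"
    using times_div_less_eq_dividend[of n "i + n - s - 1"] j unfolding phase_def by argo
  moreover have "i + n - s - 1 < n * j + n"
    using assms dividend_less_times_div[of n "i + n - s - 1"] j unfolding phase_def by simp
  ultimately show "i \<le> n * j + s \<and> n * j + s < i + n"
    using assms by linarith
next
  assume "i \<le> n * j + s \<and> n * j + s < i + n"
  then show "phase n s i = j"
    using assms unfolding phase_def by (intro div_nat_eqI) auto
qed

lemma phase_block_start:
  assumes "0 < s" "s \<le> n"
  shows "phase n s (n * j + 1) = j"
  using assms by (simp add: phase_eq_iff)

lemma phase_in_block:
  assumes "0 < s" "s \<le> n" "n * j < i" "i \<le> n * j + n + 1"
  shows "phase n s i \<in> {j, Suc j}"
  using assms by (cases "i \<le> n * j + s") (auto simp: phase_eq_iff)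

lemma phase_le:
  assumes "0 < s" "s \<le> n" "0 < i" "i \<le> n * c + 1"
  shows "phase n s i \<le> c"
proof -
  have "n * phase n s i + s < i + n"
    using assms phase_eq_iff by blast
  then have "n * phase n s i < n * Suc c" using assms by simp
  then show ?thesis by (simp only: mult_less_cancel1) simp
qed

lemma phase_Suc:
  assumes "0 < s" "s \<le> n" "0 < i" "phase n s (Suc i) \<noteq> phase n s i"
  shows "i = n * phase n s i + s"
  using assms phase_eq_iff[of s n i "phase n s i"] phase_eq_iff[of s n "Suc i" "phase n s i"]
  by auto

lemma mult_add_eq_mult_add_cancel:
  fixes n j j' p p' :: nat
  assumes "n * j + p = n * j' + p'" "0 < p" "p \<le> n" "0 < p'" "p' \<le> n"
  shows "j = j' \<and> p = p'"
proof -
  have "phase n n (n * j + p) = j" "phase n n (n * j' + p') = j'"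
    using assms by (simp_all add: phase_eq_iff)
  then show ?thesis using assms(1) by simp
qed

lemma card_clique_edge_indices:
  assumes "finite C" and clique: "\<forall>v\<in>C. \<forall>w\<in>C. v \<noteq> w \<longrightarrow> {v, w} \<in> set es"
  shows "card C choose 2 \<le> card {p \<in> {1..length es}. es ! (p - 1) \<subseteq> C}"
    (is "_ \<le> card ?P")
proof -
  have "{B. B \<subseteq> C \<and> card B = 2} \<subseteq> (\<lambda>p. es ! (p - 1)) ` ?P"
  proof
    fix B assume "B \<in> {B. B \<subseteq> C \<and> card B = 2}"
    then obtain v w where B: "B = {v, w}" "v \<noteq> w" "B \<subseteq> C" by (auto simp: card_2_iff)
    then have "B \<in> set es" using clique by auto
    then obtain q where "q < length es" "es ! q = B" by (metis in_set_conv_nth)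
    with B(3) show "B \<in> (\<lambda>p. es ! (p - 1)) ` ?P" by (force intro: image_eqI[of _ _ "Suc q"])
  qed
  then have "card {B. B \<subseteq> C \<and> card B = 2} \<le> card ((\<lambda>p. es ! (p - 1)) ` ?P)"
    by (intro card_mono) auto
  also have "\<dots> \<le> card ?P" by (intro card_image_le) simp
  finally show ?thesis by (simp add: n_subsets[OF \<open>finite C\<close>])
qed

locale clique_schedule =
  fixes V :: "'v set" and es :: "'v set list" and k :: nat and C :: "'v set" and f :: "nat \<Rightarrow> nat"
  assumes clique_subset: "C \<subseteq> V" and finite_clique: "finite C" and card_clique: "card C = k"
    and inj_f: "inj_on f {1..mvc_K k}"
    and f_index: "x \<in> {1..mvc_K k} \<Longrightarrow> f x \<in> {1..length es}"
    and f_clique_edge: "x \<in> {1..mvc_K k} \<Longrightarrow> es ! (f x - 1) \<subseteq> C"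
begin

abbreviation "m \<equiv> length es"
abbreviation "K \<equiv> mvc_K k"

abbreviation level :: "nat \<Rightarrow> nat \<Rightarrow> nat" where
  "level x \<equiv> phase (2 * m) (2 * f x)"

definition switch :: "nat \<Rightarrow> bool" where
  "switch i \<longleftrightarrow> (\<exists>x\<in>{1..K}. \<exists>j. i = 2 * m * j + 2 * f x)"

definition centre :: "nat \<Rightarrow> nat" where
  "centre i = (if switch i then Suc i else i)"

definition cover :: "nat \<Rightarrow> 'v mvc_vertex set" where
  "cover i = insert (Cv (centre i))
     (OrigV ` C \<union> EdgeV ` f ` {1..K} \<union> (\<lambda>x. U (Suc (level x i)) x) ` {1..K})"

lemma mem_cover_iff [simp]:
  "Cv c \<in> cover i \<longleftrightarrow> c = centre i"
  "U t x \<in> cover i \<longleftrightarrow> x \<in> {1..K} \<and> t = Suc (level x i)"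
  "OrigV v \<in> cover i \<longleftrightarrow> v \<in> C"
  "EdgeV p \<in> cover i \<longleftrightarrow> p \<in> f ` {1..K}"
  "LeafC a b \<notin> cover i"
  "LeafU a b c \<notin> cover i"
  by (auto simp: cover_def)

lemma offset_bounds: "x \<in> {1..K} \<Longrightarrow> 0 < 2 * f x \<and> 2 * f x \<le> 2 * m"
  using f_index[of x] by auto

lemma level_block_start: "x \<in> {1..K} \<Longrightarrow> level x (2 * m * j + 1) = j"
  using offset_bounds phase_block_start by blast

lemma level_in_block:
  "x \<in> {1..K} \<Longrightarrow> 2 * m * j < i \<Longrightarrow> i \<le> 2 * m * j + 2 * m + 1 \<Longrightarrow> level x i \<in> {j, Suc j}"
  using offset_bounds phase_in_block by blast

lemma level_le_kappa:
  assumes "x \<in> {1..K}" "0 < i" "i \<le> mvc_tau es k"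
  shows "level x i \<le> mvc_kappa k"
  using assms offset_bounds[OF assms(1)] by (intro phase_le) (auto simp: mvc_tau_def)

lemma level_Suc_eq:
  assumes "x \<in> {1..K}" "0 < i" "\<nexists>j. i = 2 * m * j + 2 * f x"
  shows "level x (Suc i) = level x i"
  using assms offset_bounds[OF assms(1)] phase_Suc by blast

lemma switch_index:
  assumes "x \<in> {1..K}" "2 * m * j + 2 * f x = 2 * m * j' + 2 * p" "p \<in> {1..m}"
  shows "f x = p"
  using mult_add_eq_mult_add_cancel[OF assms(2)] offset_bounds[OF assms(1)] assms(3) by auto

lemma even_if_switch: "switch i \<Longrightarrow> even i"
  by (auto simp: switch_def)

lemma centre_odd: "odd i \<Longrightarrow> centre i = i"
  using even_if_switch by (auto simp: centre_def)

lemma vertex_cover_cover: "is_vertex_cover (mvc_layer es k i) (cover i)"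
  unfolding is_vertex_cover_def
proof
  fix e assume "e \<in> mvc_layer es k i"
  then show "e \<inter> cover i \<noteq> {}"
    unfolding mvc_layer_def Let_def
  proof (elim UnE CollectE exE conjE)
    fix r assume "e = {Cv i, LeafC i r}" "odd i"
    then show ?thesis using centre_odd by auto
  next
    fix j x r assume "e = {U (j + 1) x, LeafU j x r}" "i = 2 * m * j + 1" "1 \<le> x" "x \<le> K"
    then show ?thesis using level_block_start by auto
  next
    fix j x assume "e = {U (j + 1) x, U (j + 2) x}" "1 \<le> x" "x \<le> K"
      "2 * m * j + 1 \<le> i" "i \<le> 2 * m * j + (2 * m + 1)"
    then show ?thesis using level_in_block[of x j i] by auto
  next
    fix q assume "e = {Cv q, Cv (q + 1)}" "even q" "i = q \<or> i = q + 1"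
    then show ?thesis using even_if_switch[of i] by (auto simp: centre_def)
  next
    fix j p y assume e: "e = {Cv i, y}" "1 \<le> p" "p \<le> m" "i = 2 * m * j + 2 * p"
      "y = EdgeV p \<or> (\<exists>v\<in>es ! (p - 1). y = OrigV v)"
    show ?thesis
    proof (cases "switch i")
      case True
      then obtain x j' where x: "x \<in> {1..K}" "i = 2 * m * j' + 2 * f x"
        unfolding switch_def by blast
      with e have "f x = p" using switch_index by auto
      then have "y \<in> cover i" using e(5) x(1) f_clique_edge[OF x(1)] by auto
      then show ?thesis using e(1) by auto
    next
      case False
      then show ?thesis using e by (auto simp: centre_def)
    qed
  qed
qed

lemma cover_subset_vertices:
  assumes "0 < i" "i \<le> mvc_tau es k"
  shows "cover i \<subseteq> mvc_vertices V es k"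
proof -
  have "centre i \<in> {1..mvc_tau es k}"
    using assms even_if_switch[of i]
    by (cases "i = mvc_tau es k") (auto simp: centre_def mvc_tau_def)
  then show ?thesis
    using level_le_kappa[OF _ assms] clique_subset f_index
    by (auto simp: cover_def mvc_vertices_def)
qed

lemma card_cover_le: "card (cover i) \<le> mvc_kprime k"
proof -
  have card_insert_Un_le: "card (insert a (A \<union> B \<union> D)) \<le> Suc (card A + card B + card D)"
    for a and A B D :: "'v mvc_vertex set"
    by (intro card_insert_le_m1) (use card_Un_le[of "A \<union> B" D] card_Un_le[of A B] in auto)
  have "card (OrigV ` C :: 'v mvc_vertex set) \<le> k"
    using card_image_le[OF finite_clique] card_clique by metis
  moreover have "card (EdgeV ` f ` {1..K} :: 'v mvc_vertex set) \<le> K"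
    using card_image_le[of "f ` {1..K}" "EdgeV :: nat \<Rightarrow> 'v mvc_vertex"]
      card_image_le[of "{1..K}" f]
    by simp
  moreover have "card ((\<lambda>x. U (Suc (level x i)) x) ` {1..K} :: 'v mvc_vertex set) \<le> K"
    using card_image_le[of "{1..K}" "\<lambda>x. U (Suc (level x i)) x"] by simp
  ultimately show ?thesis
    using card_insert_Un_le[of "Cv (centre i)" "OrigV ` C" "EdgeV ` f ` {1..K}"
        "(\<lambda>x. U (Suc (level x i)) x) ` {1..K}"]
    unfolding cover_def mvc_kprime_def by linarith
qed

lemma card_sym_diff_cover_le:
  assumes "0 < i"
  shows "card (sym_diff (cover i) (cover (Suc i))) \<le> 2"
proof -
  have "\<exists>a b. sym_diff (cover i) (cover (Suc i)) \<subseteq> {a, b}"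
  proof (cases "switch i")
    case True
    then obtain x0 j where x0: "x0 \<in> {1..K}" "i = 2 * m * j + 2 * f x0"
      unfolding switch_def by blast
    have moved: "x = x0" if "x \<in> {1..K}" "level x i \<noteq> level x (Suc i)" for x
    proof -
      have "\<exists>j'. i = 2 * m * j' + 2 * f x"
        using level_Suc_eq[OF that(1) assms] that(2) by metis
      then have "f x0 = f x" using x0 that(1) switch_index f_index by metis
      then show "x = x0" using inj_onD[OF inj_f _ that(1) x0(1)] by simp
    qed
    moreover have "centre (Suc i) = centre i"
      using True even_if_switch[of i] even_if_switch[of "Suc i"] by (auto simp: centre_def)
    ultimately have "sym_diff (cover i) (cover (Suc i))
        \<subseteq> {U (Suc (level x0 i)) x0, U (Suc (level x0 (Suc i))) x0}"
    proof (intro subsetI)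
      fix y assume "y \<in> sym_diff (cover i) (cover (Suc i))"
      then show "y \<in> {U (Suc (level x0 i)) x0, U (Suc (level x0 (Suc i))) x0}"
        using moved \<open>centre (Suc i) = centre i\<close> by (cases y) (auto simp: sym_diff_def)
    qed
    then show ?thesis by blast
  next
    case False
    have unmoved: "level x (Suc i) = level x i" if "x \<in> {1..K}" for x
      using False level_Suc_eq[OF that assms] that unfolding switch_def by blast
    have "sym_diff (cover i) (cover (Suc i)) \<subseteq> {Cv (centre i), Cv (centre (Suc i))}"
    proof (intro subsetI)
      fix y assume "y \<in> sym_diff (cover i) (cover (Suc i))"
      then show "y \<in> {Cv (centre i), Cv (centre (Suc i))}"
        using unmoved by (cases y) (auto simp: sym_diff_def)
    qed
    then show ?thesis by blast
  qed
  then obtain a b where "sym_diff (cover i) (cover (Suc i)) \<subseteq> {a, b}" by blast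
  then have "card (sym_diff (cover i) (cover (Suc i))) \<le> card {a, b}"
    by (intro card_mono) auto
  also have "\<dots> \<le> 2" by (simp add: card_insert_if)
  finally show ?thesis .
qed

theorem multistage_vc_construction:
  "multistage_vc (mvc_vertices V es k) (mvc_tau es k) (mvc_layer es k) (mvc_kprime k) 2"
  unfolding multistage_vc_def
  using cover_subset_vertices vertex_cover_cover card_cover_le card_sym_diff_cover_le
  by (intro exI[of _ cover]) auto

end

theorem lemma18:
  fixes V :: "'v set" and es :: "'v set list" and k :: nat
  assumes "finite V"
    and "distinct es"
    and "\<forall>e\<in>set es. \<exists>v w. v \<in> V \<and> w \<in> V \<and> v \<noteq> w \<and> e = {v, w}"
    and "k > 0"
    and "has_clique V es k"
  shows "multistage_vc (mvc_vertices V es k) (mvc_tau es k) (mvc_layer es k) (mvc_kprime k) 2"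
proof -
  obtain C where C: "C \<subseteq> V" "card C = k" "\<forall>v\<in>C. \<forall>w\<in>C. v \<noteq> w \<longrightarrow> {v, w} \<in> set es"
    using assms(5) unfolding has_clique_def by blast
  have "finite C" using assms(1) C(1) by (rule rev_finite_subset)
  let ?P = "{p \<in> {1..length es}. es ! (p - 1) \<subseteq> C}"
  have "card {1..mvc_K k} \<le> card ?P"
    using card_clique_edge_indices[OF \<open>finite C\<close> C(3)] C(2) by (simp add: mvc_K_def)
  then obtain f where f: "f ` {1..mvc_K k} \<subseteq> ?P" "inj_on f {1..mvc_K k}"
    using card_le_inj[of "{1..mvc_K k}" ?P] by auto
  interpret clique_schedule V es k C f
    using C \<open>finite C\<close> f by unfold_locales blast+
  show ?thesis by (rule multistage_vc_construction)
qed

end
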